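(* Suppose Assumptions A, B($\gamma$), C($\gamma$) are satisfied for some $\gamma\in(0,1]$. Let $\phi\in C^\infty_0(\mathbb{R}^d)$ and $T\in(0,\infty)$. Then the operators $$u\mapsto\int_0^{\cdot}(b^i_tD_iu_t,\phi)\,dt,\qquad u\mapsto\int_0^{\cdot}(\mathfrak{b}^i_tu_t,D_i\phi)\,dt,\qquad u\mapsto\int_0^{\cdot}(c_tu_t,\phi)\,dt$$ are continuous as operators from $\mathbb{W}^1_p(-\infty,\infty)$ to $\mathcal{L}_p([-T,T])$.
   Context: Fix $d\ge1$, $p\in(1,\infty)$, $p'=p/(p-1)$. $\mathcal{L}_p=\mathcal{L}_p(\mathbb{R}^d)$; $W^1_p$ the Sobolev space of $u\in\mathcal{L}_p$ with $Du\in\mathcal{L}_p$; $(\cdot,\cdot)$ the $L_2(\mathbb{R}^d)$ pairing; $D_i=\partial/\partial x^i$; summation convention. $\mathbb{W}^1_p(-\infty,\infty)=\mathcal{L}_p(\mathbb{R};W^1_p)$. $B_\rho(x)$ open ball. Coefficients $a^{ij}_t(x),\mathfrak{b}^i_t(x),b^i_t(x),c_t(x)$ on $\mathbb{R}\times\mathbb{R}^d$; $\mathfrak{b}=(\mathfrak{b}^i)$, $b=(b^i)$. Fixed constants: $K\ge0$, $\rho_0,\rho_1\in(0,1]$, $q=q(d,p)$ with $q>\min(d,p)$, $q>\min(d,p')$, $q\ge\max(d,p,p')$. Assumption A: (i) $a,\mathfrak{b},b,c$ real-valued Borel measurable, $c\ge0$; (ii) there is $\delta>0$ with $a^{ij}\xi^i\xi^j\ge\delta|\xi|^2$,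 $|a^{ij}|\le\delta^{-1}$; (iii) for every $x$, $t\mapsto\int_{B_1(0)}(|\mathfrak{b}_t(x+y)|+|b_t(x+y)|+c_t(x+y))\,dy$ is locally integrable to the power $p'$ on $\mathbb{R}$. Assumption B($\gamma$): for all $(t,x)$, $\int_{B_{\rho_1}(x)}\int_{B_{\rho_1}(x)}(|\mathfrak{b}_t(y)-\mathfrak{b}_t(z)|^q+|b_t(y)-b_t(z)|^q+|c_t(y)-c_t(z)|^q)\,dy\,dz\le K1_{q>d}+\rho_1^d\gamma$. Assumption C($\gamma$): for all $\rho\in(0,\rho_0]$, $s\in\mathbb{R}$, $i,j$: $\rho^{-2d-2}\int_s^{s+\rho^2}\sup_{x}\int_{B_\rho(x)}\int_{B_\rho(x)}|a^{ij}_t(y)-a^{ij}_t(z)|\,dy\,dz\,dt\le\gamma$. *)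

theory Defs
  imports "HOL-Analysis.Analysis"
begin

text \<open>Points of R^d are vectors of type real^'d; d = CARD('d).\<close>

definition partial :: "'d::finite \<Rightarrow> (real^'d \<Rightarrow> real) \<Rightarrow> real^'d \<Rightarrow> real" where
  "partial i f = (\<lambda>x. deriv (\<lambda>s. f (x + s *\<^sub>R axis i 1)) 0)"

definition grad :: "(real^'d::finite \<Rightarrow> real) \<Rightarrow> real^'d \<Rightarrow> real^'d" where
  "grad f = (\<lambda>x. \<chi> i. partial i f x)"

coinductive smooth_fn :: "(real^'d::finite \<Rightarrow> real) \<Rightarrow> bool" where
  "continuous_on UNIV f \<Longrightarrow>
   (\<forall>i x. (\<lambda>s. f (x + s *\<^sub>R axis i 1)) differentiable (at 0)) \<Longrightarrow>
   (\<forall>i. smooth_fn (partial i f)) \<Longrightarrow> smooth_fn f"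

definition test_fn :: "(real^'d::finite \<Rightarrow> real) \<Rightarrow> bool" where
  "test_fn \<phi> \<longleftrightarrow> smooth_fn \<phi> \<and> compact (closure {x. \<phi> x \<noteq> 0})"

definition weak_grad :: "(real^'d::finite \<Rightarrow> real) \<Rightarrow> (real^'d \<Rightarrow> real^'d) \<Rightarrow> bool" where
  "weak_grad f g \<longleftrightarrow>
     (\<forall>\<psi>. test_fn \<psi> \<longrightarrow> (\<forall>i.
        integrable lborel (\<lambda>x. f x * partial i \<psi> x) \<and>
        integrable lborel (\<lambda>x. g x $ i * \<psi> x) \<and>
        (LINT x|lborel. f x * partial i \<psi> x) = - (LINT x|lborel. g x $ i * \<psi> x)))"

text \<open>Membership in W^1_p(-infty,infty) = L_p(R; W^1_p): u together with its
  (time-dependent) weak gradient Du.\<close>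
definition in_W :: "real \<Rightarrow> (real \<Rightarrow> real^'d::finite \<Rightarrow> real) \<Rightarrow> (real \<Rightarrow> real^'d \<Rightarrow> real^'d) \<Rightarrow> bool" where
  "in_W p u Du \<longleftrightarrow>
     (\<lambda>(t,x). u t x) \<in> borel_measurable (lborel \<Otimes>\<^sub>M lborel) \<and>
     (\<lambda>(t,x). Du t x) \<in> borel_measurable (lborel \<Otimes>\<^sub>M lborel) \<and>
     (\<integral>\<^sup>+ t. \<integral>\<^sup>+ x. ennreal (\<bar>u t x\<bar> powr p + norm (Du t x) powr p) \<partial>lborel \<partial>lborel) < \<infinity> \<and>
     (AE t in lborel. weak_grad (u t) (Du t))"

definition W_dist :: "real \<Rightarrow> (real \<Rightarrow> real^'d::finite \<Rightarrow> real) \<Rightarrow> (real \<Rightarrow> real^'d \<Rightarrow> real^'d)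
    \<Rightarrow> (real \<Rightarrow> real^'d \<Rightarrow> real) \<Rightarrow> (real \<Rightarrow> real^'d \<Rightarrow> real^'d) \<Rightarrow> ennreal" where
  "W_dist p u Du v Dv =
     (\<integral>\<^sup>+ t. \<integral>\<^sup>+ x. ennreal (\<bar>u t x - v t x\<bar> powr p + norm (Du t x - Dv t x) powr p) \<partial>lborel \<partial>lborel)"

definition Lp_dist :: "real \<Rightarrow> real \<Rightarrow> (real \<Rightarrow> real) \<Rightarrow> (real \<Rightarrow> real) \<Rightarrow> ennreal" where
  "Lp_dist p T F G = (\<integral>\<^sup>+ s\<in>{-T..T}. ennreal (\<bar>F s - G s\<bar> powr p) \<partial>lborel)"

text \<open>An operator of the form u \<mapsto> int_0^. h(u,t) dt, where h u Du t = (integrand in x)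
  integrated over R^d, is well defined and continuous from W^1_p(-infty,infty) to L_p([-T,T]).\<close>
definition cont_op :: "real \<Rightarrow> real \<Rightarrow>
    ((real \<Rightarrow> real^'d::finite \<Rightarrow> real) \<Rightarrow> (real \<Rightarrow> real^'d \<Rightarrow> real^'d) \<Rightarrow> real \<Rightarrow> real^'d \<Rightarrow> real) \<Rightarrow> bool" where
  "cont_op p T h \<longleftrightarrow>
    (let Op = (\<lambda>u Du s. LBINT t=0..s. (LINT x|lborel. h u Du t x)) in
     (\<forall>u Du. in_W p u Du \<longrightarrow>
        (AE t in lborel. integrable lborel (h u Du t)) \<and>
        (\<forall>s\<in>{-T..T}. interval_lebesgue_integrable lborel 0 s (\<lambda>t. LINT x|lborel. h u Du t x)) \<and>
        Op u Du \<in> borel_measurable (restrict_space lborel {-T..T}) \<and>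
        (\<integral>\<^sup>+ s\<in>{-T..T}. ennreal (\<bar>Op u Du s\<bar> powr p) \<partial>lborel) < \<infinity>) \<and>
     (\<forall>u Du. in_W p u Du \<longrightarrow> (\<forall>\<epsilon>>0. \<exists>\<delta>>0. \<forall>v Dv. in_W p v Dv \<longrightarrow>
        W_dist p u Du v Dv < ennreal \<delta> \<longrightarrow> Lp_dist p T (Op u Du) (Op v Dv) < ennreal \<epsilon>)))"

definition assumption_A :: "real \<Rightarrow> (real \<Rightarrow> real^'d::finite \<Rightarrow> real^'d^'d) \<Rightarrow> (real \<Rightarrow> real^'d \<Rightarrow> real^'d)
    \<Rightarrow> (real \<Rightarrow> real^'d \<Rightarrow> real^'d) \<Rightarrow> (real \<Rightarrow> real^'d \<Rightarrow> real) \<Rightarrow> bool" where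
  "assumption_A p a bb b c \<longleftrightarrow>
    (\<forall>i j. (\<lambda>(t,x). a t x $ i $ j) \<in> borel_measurable borel) \<and>
    (\<lambda>(t,x). bb t x) \<in> borel_measurable borel \<and>
    (\<lambda>(t,x). b t x) \<in> borel_measurable borel \<and>
    (\<lambda>(t,x). c t x) \<in> borel_measurable borel \<and>
    (\<forall>t x. c t x \<ge> 0) \<and>
    (\<exists>\<delta>>0. (\<forall>t x \<xi>. (\<Sum>i\<in>UNIV. \<Sum>j\<in>UNIV. a t x $ i $ j * \<xi> $ i * \<xi> $ j) \<ge> \<delta> * (norm \<xi>)\<^sup>2) \<and>
            (\<forall>t x i j. \<bar>a t x $ i $ j\<bar> \<le> 1 / \<delta>)) \<and>
    (\<forall>x. let I = (\<lambda>t. \<integral>\<^sup>+ y\<in>ball 0 1. ennreal (norm (bb t (x + y)) + norm (b t (x + y)) + c t (x + y)) \<partial>lborel)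
         in (AE t in lborel. I t < \<infinity>) \<and>
            (\<forall>r1 r2. (\<integral>\<^sup>+ t\<in>{r1..r2}. ennreal (enn2real (I t) powr (p / (p - 1))) \<partial>lborel) < \<infinity>))"

definition assumption_B :: "real \<Rightarrow> real \<Rightarrow> real \<Rightarrow> real \<Rightarrow> (real \<Rightarrow> real^'d::finite \<Rightarrow> real^'d)
    \<Rightarrow> (real \<Rightarrow> real^'d \<Rightarrow> real^'d) \<Rightarrow> (real \<Rightarrow> real^'d \<Rightarrow> real) \<Rightarrow> bool" where
  "assumption_B q K \<rho>1 \<gamma> bb b c \<longleftrightarrow>
    (\<forall>t x. (\<integral>\<^sup>+ y\<in>ball x \<rho>1. \<integral>\<^sup>+ z\<in>ball x \<rho>1.
              ennreal (norm (bb t y - bb t z) powr q + norm (b t y - b t z) powr q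
                       + \<bar>c t y - c t z\<bar> powr q) \<partial>lborel \<partial>lborel)
           \<le> ennreal ((if q > real CARD('d) then K else 0) + \<rho>1 ^ CARD('d) * \<gamma>))"

definition assumption_C :: "real \<Rightarrow> real \<Rightarrow> (real \<Rightarrow> real^'d::finite \<Rightarrow> real^'d^'d) \<Rightarrow> bool" where
  "assumption_C \<rho>0 \<gamma> a \<longleftrightarrow>
    (\<forall>\<rho> s i j. 0 < \<rho> \<and> \<rho> \<le> \<rho>0 \<longrightarrow>
       ennreal (\<rho> powr (- (2 * real CARD('d) + 2))) *
       (\<integral>\<^sup>+ t\<in>{s..s + \<rho>\<^sup>2}. (SUP x. \<integral>\<^sup>+ y\<in>ball x \<rho>. \<integral>\<^sup>+ z\<in>ball x \<rho>.
            ennreal \<bar>a t y $ i $ j - a t z $ i $ j\<bar> \<partial>lborel \<partial>lborel) \<partial>lborel)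
       \<le> ennreal \<gamma>)"

end

(* Each operator integrates in time, from 0, the space integral of an integrand h(u, Du)
   that is linear in (u, Du) and dominated by g (|u| + |Du|), where g is |b| |phi|,
   |bb| |grad phi| or |c| |phi|.  Young's inequality with a free parameter e bounds the
   integral of |h(u, Du)| over [-T,T] x R^d by C(e) times the integral of g^p' plus e^p/p
   times the p-th power of the W^1_p norm of u.  Taking e large and then the W-distance
   small gives finiteness and continuity, as soon as g is in L_p'([-T,T] x R^d).
   That is a local statement: cover supp phi by finitely many balls of radius rho_1.  On
   such a ball, averaging |f(y)| <= |f(y) - f(z)| + |f(z)| over z, Jensen's inequality and
   x^p' <= 1 + x^q (recall q >= p') bound the L_p' norm of a coefficient f by its mean
   q-oscillation, controlled by Assumption B, plus the p'-th power of its integral over a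
   unit ball, whose time integral is finite by Assumption A. *)

theory Submission
  imports Defs
begin

lemma Youngs_inequality_scaled:
  fixes p r x y e :: real
  assumes p: "p > 1" and r: "r = p / (p - 1)" and x: "x \<ge> 0" and y: "y \<ge> 0" and e: "e > 0"
  shows "x * y \<le> e powr (-r) * x powr r / r + e powr p * y powr p / p"
proof -
  have r1: "r > 1" using p unfolding r by (simp add: less_divide_eq)
  have rp: "1 / r + 1 / p = 1" using p unfolding r by (simp add: field_simps)
  have "(x / e) * (e * y) \<le> (x / e) powr r / r + (e * y) powr p / p"
    by (rule Youngs_inequality) (use r1 p rp x y e in auto)
  then show ?thesis
    using x y e by (simp add: powr_divide powr_minus_divide powr_mult)
qed

lemma powr_tangent_le:
  fixes x c r :: real
  assumes x: "x \<ge> 0" and c: "c > 0" and r: "r > 1"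
  shows "x \<le> x powr r / (r * c powr (r - 1)) + (1 - 1 / r) * c"
proof -
  define s where "s = r / (r - 1)"
  have s: "s > 1" "1 / r + 1 / s = 1" "(r - 1) / r * s = 1"
    using r unfolding s_def by (auto simp: field_simps)
  have "(x * c powr (- (r - 1) / r)) * c powr ((r - 1) / r)
      \<le> (x * c powr (- (r - 1) / r)) powr r / r + (c powr ((r - 1) / r)) powr s / s"
    by (rule Youngs_inequality) (use r s x c in auto)
  also have "(x * c powr (- (r - 1) / r)) powr r = x powr r * c powr (- (r - 1))"
    using x c r by (simp add: powr_mult powr_powr)
  also have "\<dots> = x powr r / c powr (r - 1)"
    by (simp only: divide_inverse powr_minus)
  also have "(c powr ((r - 1) / r)) powr s = c"
    using c s(3) by (simp add: powr_powr)
  also have "c / s = (1 - 1 / r) * c"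
    using r by (simp add: s_def field_simps)
  finally show ?thesis
    using c r by (simp add: powr_add[symmetric] field_simps)
qed

lemma powr_le_1_plus_powr:
  fixes x r q :: real
  assumes "0 \<le> x" "0 < r" "r \<le> q"
  shows "x powr r \<le> 1 + x powr q"
proof (cases "x \<le> 1")
  case True
  then have "x powr r \<le> 1" using assms by (cases "x = 0") (auto intro!: powr_le1)
  then show ?thesis by (smt (verit) powr_ge_zero)
next
  case False
  then have "x powr r \<le> x powr q" using assms by (intro powr_mono) auto
  then show ?thesis by simp
qed

lemma powr_add_le:
  fixes x y r :: real
  assumes "0 \<le> x" "0 \<le> y" "0 < r"
  shows "(x + y) powr r \<le> 2 powr r * (x powr r + y powr r)"
proof -
  have "(x + y) powr r \<le> (2 * max x y) powr r"
    using assms by (intro powr_mono2) auto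
  also have "\<dots> = 2 powr r * max x y powr r" using assms by (simp add: powr_mult)
  also have "max x y powr r \<le> x powr r + y powr r"
    by (cases "x \<le> y") (auto simp: max_def)
  finally show ?thesis by simp
qed

lemma Young_coefficient_small:
  fixes r G \<eta> :: real
  assumes "r > 0" "G \<ge> 0" "\<eta> > 0"
  obtains e where "e > 0" "2 * e powr (- r) / r * G < \<eta>"
proof -
  have "((\<lambda>e. 2 * e powr (- r) / r * G) \<longlongrightarrow> 0) at_top"
    using assms(1) by (intro tendsto_mult_left_zero tendsto_divide_zero tendsto_mult_right_zero
        tendsto_neg_powr[OF _ filterlim_ident]) auto
  from order_tendstoD(2)[OF this assms(3)]
  obtain N where "\<And>e. e \<ge> N \<Longrightarrow> 2 * e powr (- r) / r * G < \<eta>"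
    by (auto simp: eventually_at_top_linorder)
  then show ?thesis
    using that[of "max N 1"] by simp
qed

section \<open>Oscillation estimates on a ball\<close>

lemma ennreal_le_ennrealE:
  assumes "X \<le> ennreal b" "0 \<le> b"
  obtains x where "X = ennreal x" "0 \<le> x" "x \<le> b"
  using assms by (cases X) (auto simp: top_unique)

lemma set_nn_integral_affine:
  assumes [measurable]: "f \<in> borel_measurable M" "B \<in> sets M"
    and "\<alpha> \<ge> 0" "\<beta> \<ge> 0" "\<And>z. f z \<ge> 0"
  shows "(\<integral>\<^sup>+ z\<in>B. ennreal (\<alpha> * f z + \<beta>) \<partial>M)
    = ennreal \<alpha> * (\<integral>\<^sup>+ z\<in>B. ennreal (f z) \<partial>M) + ennreal \<beta> * emeasure M B"
proof -
  have "(\<integral>\<^sup>+ z\<in>B. ennreal (\<alpha> * f z + \<beta>) \<partial>M)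
      = (\<integral>\<^sup>+ z. ennreal \<alpha> * (ennreal (f z) * indicator B z) + ennreal \<beta> * indicator B z \<partial>M)"
    using assms by (intro nn_integral_cong) (simp add: ennreal_mult distrib_right mult.assoc)
  also have "\<dots> = ennreal \<alpha> * (\<integral>\<^sup>+ z\<in>B. ennreal (f z) \<partial>M) + ennreal \<beta> * emeasure M B"
    by (simp add: nn_integral_add nn_integral_cmult)
  finally show ?thesis .
qed

lemma set_nn_integral_powr_Jensen:
  fixes F :: "'a \<Rightarrow> real"
  assumes r: "r > 1" and [measurable]: "F \<in> borel_measurable M" and F0: "\<And>z. F z \<ge> 0"
    and B[measurable]: "B \<in> sets M" and mB: "emeasure M B = ennreal m" and m0: "m > 0"
    and a: "(\<integral>\<^sup>+ z\<in>B. ennreal (F z) \<partial>M) = ennreal a" "a \<ge> 0"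
    and R: "(\<integral>\<^sup>+ z\<in>B. ennreal (F z powr r) \<partial>M) = ennreal R" "R \<ge> 0"
  shows "a powr r \<le> m powr (r - 1) * R"
proof (cases "a = 0")
  case True then show ?thesis using m0 R(2) by simp
next
  case False
  \<comment> \<open>integrate the tangent line of \<open>x powr r\<close> at the mean value \<open>a / m\<close> of \<open>F\<close>\<close>
  define c where "c = a / m"
  define \<alpha> where "\<alpha> = 1 / (r * c powr (r - 1))"
  have c0: "c > 0" and \<alpha>0: "\<alpha> > 0"
    using False a(2) m0 r unfolding c_def \<alpha>_def by auto
  have "F z \<le> \<alpha> * F z powr r + (1 - 1 / r) * c" for z
    using powr_tangent_le[OF F0 c0 r] unfolding \<alpha>_def by simp
  then have "ennreal a \<le> (\<integral>\<^sup>+ z\<in>B. ennreal (\<alpha> * F z powr r + (1 - 1 / r) * c) \<partial>M)"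
    unfolding a(1)[symmetric] by (intro nn_integral_mono mult_right_mono ennreal_leI) auto
  also have "\<dots> = ennreal \<alpha> * ennreal R + ennreal ((1 - 1 / r) * c) * ennreal m"
    by (subst set_nn_integral_affine) (use \<alpha>0 c0 r F0 in \<open>auto simp: R(1) mB\<close>)
  also have "\<dots> = ennreal (\<alpha> * R + (1 - 1 / r) * a)"
  proof -
    have "0 \<le> (1 - 1 / r) * c" "0 \<le> (1 - 1 / r) * a" using c0 a(2) r by simp_all
    moreover have "c * m = a" using m0 by (simp add: c_def)
    ultimately show ?thesis
      using \<alpha>0 R(2) m0
      by (simp add: ennreal_mult[symmetric] ennreal_plus[symmetric] mult.assoc del: ennreal_plus)
  qed
  finally have "a \<le> \<alpha> * R + (1 - 1 / r) * a"
    using \<alpha>0 r R(2) a(2) by (subst (asm) ennreal_le_iff) auto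
  then have "a / r \<le> \<alpha> * R"
    by (simp add: left_diff_distrib)
  then have "a * c powr (r - 1) \<le> R"
    using r c0 unfolding \<alpha>_def by (simp add: field_simps)
  then show ?thesis
    using m0 a(2) c0 unfolding c_def
    by (simp add: powr_divide field_simps powr_add[symmetric] powr_diff)
qed

lemma set_nn_integral_powr_le_1_plus:
  fixes F :: "'a \<Rightarrow> real"
  assumes [measurable]: "F \<in> borel_measurable M" "B \<in> sets M"
    and "\<And>z. F z \<ge> 0" "0 < s" "s \<le> t"
  shows "(\<integral>\<^sup>+ z\<in>B. ennreal (F z powr s) \<partial>M) \<le> emeasure M B + (\<integral>\<^sup>+ z\<in>B. ennreal (F z powr t) \<partial>M)"
proof -
  have "(\<integral>\<^sup>+ z\<in>B. ennreal (F z powr s) \<partial>M) \<le> (\<integral>\<^sup>+ z\<in>B. ennreal (1 * F z powr t + 1) \<partial>M)"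
    using assms powr_le_1_plus_powr
    by (intro nn_integral_mono mult_right_mono ennreal_leI) (auto simp: add.commute)
  also have "\<dots> = emeasure M B + (\<integral>\<^sup>+ z\<in>B. ennreal (F z powr t) \<partial>M)"
    by (subst set_nn_integral_affine) (auto simp: add.commute)
  finally show ?thesis .
qed

lemma powr_norm_le_oscillation:
  fixes f :: "'a::euclidean_space \<Rightarrow> 'v::euclidean_space"
  assumes r: "1 < r" "r \<le> q" and [measurable]: "f \<in> borel_measurable lborel"
    and B[measurable]: "B \<in> sets lborel" and mB: "emeasure lborel B = ennreal m" and m0: "m > 0"
    and osc: "(\<integral>\<^sup>+ z\<in>B. ennreal (norm (f y - f z) powr q) \<partial>lborel) = ennreal e" "e \<ge> 0"
    and J: "(\<integral>\<^sup>+ z\<in>B. ennreal (norm (f z)) \<partial>lborel) \<le> ennreal I" "I \<ge> 0"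
  shows "norm (f y) powr r \<le> 2 powr r * (e / m + 1 + m powr (- r) * I powr r)"
proof -
  define F where "F z = norm (f y - f z)" for z
  have mF[measurable]: "F \<in> borel_measurable lborel" unfolding F_def by measurable
  have F0: "F z \<ge> 0" for z unfolding F_def by simp
  have "(\<integral>\<^sup>+ z\<in>B. ennreal (F z powr r) \<partial>lborel) \<le> ennreal (m + e)"
    using set_nn_integral_powr_le_1_plus[OF mF B F0, of r q] r osc mB m0
    by (simp add: F_def)
  then obtain R where R: "(\<integral>\<^sup>+ z\<in>B. ennreal (F z powr r) \<partial>lborel) = ennreal R" "R \<ge> 0" "R \<le> m + e"
    using m0 osc(2) by (elim ennreal_le_ennrealE) auto
  have "(\<integral>\<^sup>+ z\<in>B. ennreal (F z) \<partial>lborel) \<le> ennreal (m + R)"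
    using set_nn_integral_powr_le_1_plus[OF mF B F0, of 1 r] r R(1,2) mB m0 F0
    by (simp add: ennreal_plus[symmetric] del: ennreal_plus)
  then obtain a where a: "(\<integral>\<^sup>+ z\<in>B. ennreal (F z) \<partial>lborel) = ennreal a" "a \<ge> 0"
    using m0 R(2) by (elim ennreal_le_ennrealE) auto
  have Jensen: "a powr r \<le> m powr (r - 1) * R"
    by (rule set_nn_integral_powr_Jensen[OF r(1) mF F0 B mB m0 a R(1,2)])
  have "ennreal (m * norm (f y)) = (\<integral>\<^sup>+ z\<in>B. ennreal (norm (f y)) \<partial>lborel)"
    using mB m0 nn_integral_cmult_indicator[OF B, of "ennreal (norm (f y))"]
    by (simp add: ennreal_mult mult.commute)
  also have "\<dots> \<le> (\<integral>\<^sup>+ z\<in>B. (ennreal (F z) + ennreal (norm (f z))) \<partial>lborel)"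
    unfolding F_def
    by (intro nn_integral_mono mult_right_mono)
       (auto simp: ennreal_plus[symmetric] simp del: ennreal_plus intro!: ennreal_leI,
        metis add.commute norm_triangle_sub)
  also have "\<dots> \<le> ennreal (a + I)"
    using J a by (simp add: distrib_right nn_integral_add add_left_mono)
  finally have "m * norm (f y) \<le> a + I"
    using a J by (simp add: ennreal_plus[symmetric] del: ennreal_plus)
  then have "norm (f y) \<le> (a + I) / m"
    using m0 by (simp add: field_simps)
  then have "norm (f y) powr r \<le> ((a + I) / m) powr r"
    using r by (intro powr_mono2) auto
  also have "\<dots> = (a + I) powr r * m powr (- r)"
    using m0 a J by (simp add: powr_divide powr_minus_divide)
  also have "\<dots> \<le> 2 powr r * (m powr (r - 1) * (m + e) + I powr r) * m powr (- r)"
  proof -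
    have "(a + I) powr r \<le> 2 powr r * (a powr r + I powr r)"
      using powr_add_le[OF a(2) J(2)] r by simp
    also have "a powr r \<le> m powr (r - 1) * (m + e)"
      using Jensen R(3) m0 by (smt (verit) mult_left_mono powr_ge_zero)
    finally show ?thesis by (simp add: mult_right_mono)
  qed
  also have "\<dots> = 2 powr r * (e / m + 1 + m powr (- r) * I powr r)"
  proof -
    have k: "m powr (r - 1) * m powr (- r) = 1 / m"
      using m0 by (simp add: powr_diff powr_minus_divide)
    have "2 powr r * (m powr (r - 1) * (m + e) + I powr r) * m powr (- r)
        = 2 powr r * ((m + e) * (m powr (r - 1) * m powr (- r)) + m powr (- r) * I powr r)"
      by (simp add: algebra_simps)
    then show ?thesis
      unfolding k using m0 by (simp add: field_simps)
  qed
  finally show ?thesis .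
qed

lemma set_nn_integral_powr_le_oscillation:
  fixes f :: "'a::euclidean_space \<Rightarrow> 'v::euclidean_space"
  assumes r: "1 < r" "r \<le> q" and mf[measurable]: "f \<in> borel_measurable lborel"
    and B[measurable]: "B \<in> sets lborel" and mB: "emeasure lborel B = ennreal m" and m0: "m > 0"
    and osc: "(\<integral>\<^sup>+ y\<in>B. (\<integral>\<^sup>+ z\<in>B. ennreal (norm (f y - f z) powr q) \<partial>lborel) \<partial>lborel) \<le> ennreal M0"
      "M0 \<ge> 0"
    and J: "(\<integral>\<^sup>+ z\<in>B. ennreal (norm (f z)) \<partial>lborel) \<le> ennreal I" "I \<ge> 0"
  shows "(\<integral>\<^sup>+ y\<in>B. ennreal (norm (f y) powr r) \<partial>lborel)
    \<le> ennreal (2 powr r * (M0 / m + m + m powr (1 - r) * I powr r))"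
proof -
  define E where "E y = (\<integral>\<^sup>+ z\<in>B. ennreal (norm (f y - f z) powr q) \<partial>lborel)" for y
  define c where "c = 2 powr r * (1 + m powr (- r) * I powr r)"
  have c0: "c \<ge> 0" unfolding c_def by simp
  have [measurable]: "E \<in> borel_measurable lborel"
    unfolding E_def by measurable
  have pointwise: "ennreal (norm (f y) powr r) \<le> ennreal (2 powr r / m) * E y + ennreal c" for y
  proof (cases "E y")
    case (real e)
    then have "norm (f y) powr r \<le> 2 powr r / m * e + c"
      using powr_norm_le_oscillation[OF r mf B mB m0 _ _ J, of y e] m0
      by (simp add: E_def c_def field_simps)
    then show ?thesis
      using real m0 c0 by (simp add: ennreal_mult[symmetric] ennreal_plus[symmetric] del: ennreal_plus)
  qed (use m0 in \<open>simp add: ennreal_mult_top\<close>)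
  have "(\<integral>\<^sup>+ y\<in>B. ennreal (norm (f y) powr r) \<partial>lborel)
      \<le> (\<integral>\<^sup>+ y\<in>B. (ennreal (2 powr r / m) * E y + ennreal c) \<partial>lborel)"
    using pointwise by (intro nn_integral_mono mult_right_mono) auto
  also have "\<dots> = ennreal (2 powr r / m) * (\<integral>\<^sup>+ y\<in>B. E y \<partial>lborel) + ennreal c * ennreal m"
    using mB B by (simp add: distrib_right nn_integral_add nn_integral_cmult mult.assoc)
  also have "\<dots> \<le> ennreal (2 powr r / m) * ennreal M0 + ennreal c * ennreal m"
    using osc(1) unfolding E_def by (intro add_right_mono mult_left_mono) auto
  also have "\<dots> = ennreal (2 powr r * (M0 / m + m + m powr (1 - r) * I powr r))"
  proof -
    have "m powr (- r) * m = m powr (1 - r)"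
      using m0 by (simp add: powr_diff powr_minus_divide)
    then have "2 powr r / m * M0 + c * m = 2 powr r * (M0 / m + m + m powr (1 - r) * I powr r)"
      unfolding c_def by (simp add: algebra_simps)
    then show ?thesis
      using m0 c0 osc(2) by (simp add: ennreal_mult[symmetric] ennreal_plus[symmetric] del: ennreal_plus)
  qed
  finally show ?thesis .
qed

section \<open>Local integrability in space and time\<close>

definition ball_local_Lr :: "real \<Rightarrow> real \<Rightarrow> (real \<Rightarrow> 'a::euclidean_space \<Rightarrow> 'v::real_normed_vector) \<Rightarrow> bool"
  where "ball_local_Lr r \<rho> f \<longleftrightarrow> (\<forall>x0 T.
    (\<integral>\<^sup>+ t\<in>{-T..T}. (\<integral>\<^sup>+ y\<in>ball x0 \<rho>. ennreal (norm (f t y) powr r) \<partial>lborel) \<partial>lborel) < \<infinity>)"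

definition time_local_Lr :: "real \<Rightarrow> (real \<Rightarrow> 'a::euclidean_space \<Rightarrow> 'v::real_normed_vector) \<Rightarrow> bool"
  where "time_local_Lr r f \<longleftrightarrow> (\<forall>T.
    (\<integral>\<^sup>+ t\<in>{-T..T}. (\<integral>\<^sup>+ x. ennreal (norm (f t x) powr r) \<partial>lborel) \<partial>lborel) < \<infinity>)"

lemma time_local_Lr_mono:
  assumes "time_local_Lr r g" "r \<ge> 0" "\<And>t x. norm (f t x) \<le> norm (g t x)"
  shows "time_local_Lr r f"
  unfolding time_local_Lr_def
proof
  fix T
  have "(\<integral>\<^sup>+ t\<in>{-T..T}. (\<integral>\<^sup>+ x. ennreal (norm (f t x) powr r) \<partial>lborel) \<partial>lborel)
      \<le> (\<integral>\<^sup>+ t\<in>{-T..T}. (\<integral>\<^sup>+ x. ennreal (norm (g t x) powr r) \<partial>lborel) \<partial>lborel)"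
    using assms(2,3) by (intro nn_integral_mono mult_right_mono ennreal_leI powr_mono2) auto
  then show "(\<integral>\<^sup>+ t\<in>{-T..T}. (\<integral>\<^sup>+ x. ennreal (norm (f t x) powr r) \<partial>lborel) \<partial>lborel) < \<infinity>"
    using assms(1) unfolding time_local_Lr_def by (meson order_le_less_trans)
qed

lemma borel_measurable_lborel_prod:
  "(f \<in> borel_measurable (lborel \<Otimes>\<^sub>M lborel)) = (f \<in> borel_measurable borel)"
  by (simp add: lborel_prod)

lemma measurable_slice:
  assumes "(\<lambda>(t,x). f t x) \<in> borel_measurable (M \<Otimes>\<^sub>M N)" "t \<in> space M"
  shows "f t \<in> borel_measurable N"
  using measurable_Pair2[OF assms] by simp

lemma borel_measurable_translate_snd:
  fixes F :: "real \<Rightarrow> 'a::euclidean_space \<Rightarrow> 'b::topological_space"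
  assumes "(\<lambda>(t,x). F t x) \<in> borel_measurable borel"
  shows "(\<lambda>(t,y). F t (x0 + y)) \<in> borel_measurable borel"
proof -
  have "(\<lambda>z::real \<times> 'a. (fst z, x0 + snd z)) \<in> borel_measurable borel"
    by (intro borel_measurable_continuous_onI continuous_intros)
  from measurable_comp[OF this assms] show ?thesis
    by (simp add: comp_def case_prod_beta)
qed

lemma nn_integral_ball_translate:
  fixes F :: "'a::euclidean_space \<Rightarrow> ennreal"
  assumes [measurable]: "F \<in> borel_measurable borel"
  shows "(\<integral>\<^sup>+ y\<in>ball 0 \<rho>. F (x0 + y) \<partial>lborel) = (\<integral>\<^sup>+ y\<in>ball x0 \<rho>. F y \<partial>lborel)"
proof -
  have "(\<integral>\<^sup>+ y\<in>ball x0 \<rho>. F y \<partial>lborel) = (\<integral>\<^sup>+ y\<in>ball x0 \<rho>. F y \<partial>distr lborel borel ((+) x0))"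
    by (simp add: lborel_distr_plus)
  also have "\<dots> = (\<integral>\<^sup>+ y. F (x0 + y) * indicator (ball x0 \<rho>) (x0 + y) \<partial>lborel)"
  proof -
    have [measurable]: "ball x0 \<rho> \<in> sets borel" by simp
    show ?thesis by (subst nn_integral_distr) auto
  qed
  also have "\<dots> = (\<integral>\<^sup>+ y\<in>ball 0 \<rho>. F (x0 + y) \<partial>lborel)"
    by (intro nn_integral_cong) (auto simp: indicator_def dist_norm)
  finally show ?thesis ..
qed

lemma ball_nn_integral_powr_finite:
  fixes f :: "real \<Rightarrow> 'a::euclidean_space \<Rightarrow> 'v::euclidean_space" and I :: "real \<Rightarrow> ennreal"
  assumes r: "1 < r" "r \<le> q" and \<rho>: "\<rho> > 0"
    and mf: "(\<lambda>(t,x). f t x) \<in> borel_measurable (lborel \<Otimes>\<^sub>M lborel)"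
    and osc: "\<And>t. (\<integral>\<^sup>+ y\<in>ball x0 \<rho>. (\<integral>\<^sup>+ z\<in>ball x0 \<rho>.
        ennreal (norm (f t y - f t z) powr q) \<partial>lborel) \<partial>lborel) \<le> ennreal M0" "M0 \<ge> 0"
    and I: "\<And>t. (\<integral>\<^sup>+ z\<in>ball x0 \<rho>. ennreal (norm (f t z)) \<partial>lborel) \<le> I t"
    and I_ae: "AE t in lborel. I t < \<infinity>" and [measurable]: "I \<in> borel_measurable lborel"
    and I_int: "(\<integral>\<^sup>+ t\<in>{-T..T}. ennreal (enn2real (I t) powr r) \<partial>lborel) < \<infinity>"
  shows "(\<integral>\<^sup>+ t\<in>{-T..T}. (\<integral>\<^sup>+ y\<in>ball x0 \<rho>. ennreal (norm (f t y) powr r) \<partial>lborel) \<partial>lborel) < \<infinity>"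
proof -
  define m where "m = measure lborel (ball x0 \<rho>)"
  have m0: "m > 0" unfolding m_def using content_ball_pos[OF \<rho>] by simp
  have mB: "emeasure lborel (ball x0 \<rho>) = ennreal m"
    unfolding m_def using emeasure_lborel_ball_finite[of x0 \<rho>] by (intro emeasure_eq_ennreal_measure) simp
  define C0 where "C0 = 2 powr r * (M0 / m + m)"
  define C1 where "C1 = 2 powr r * m powr (1 - r)"
  have C: "C0 \<ge> 0" "C1 \<ge> 0" unfolding C0_def C1_def using m0 osc(2) by simp_all
  have "AE t in lborel. (\<integral>\<^sup>+ y\<in>ball x0 \<rho>. ennreal (norm (f t y) powr r) \<partial>lborel) * indicator {-T..T} t
      \<le> ennreal (C1 * enn2real (I t) powr r + C0) * indicator {-T..T} t"
    using I_ae
  proof eventually_elim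
    case (elim t)
    have "(\<integral>\<^sup>+ z\<in>ball x0 \<rho>. ennreal (norm (f t z)) \<partial>lborel) \<le> ennreal (enn2real (I t))"
      using I[of t] elim by (simp add: ennreal_enn2real_if)
    from set_nn_integral_powr_le_oscillation[OF r measurable_slice[OF mf] _ mB m0 osc(1) osc(2) this]
    show ?case
      unfolding C0_def C1_def by (intro mult_right_mono) (auto simp: algebra_simps)
  qed
  then have "(\<integral>\<^sup>+ t\<in>{-T..T}. (\<integral>\<^sup>+ y\<in>ball x0 \<rho>. ennreal (norm (f t y) powr r) \<partial>lborel) \<partial>lborel)
      \<le> (\<integral>\<^sup>+ t\<in>{-T..T}. ennreal (C1 * enn2real (I t) powr r + C0) \<partial>lborel)"
    by (rule nn_integral_mono_AE)
  also have "\<dots> = ennreal C1 * (\<integral>\<^sup>+ t\<in>{-T..T}. ennreal (enn2real (I t) powr r) \<partial>lborel)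
      + ennreal C0 * emeasure lborel {-T..T}"
    using C by (intro set_nn_integral_affine) auto
  also have "\<dots> < \<infinity>"
    using I_int emeasure_bounded_finite[of "{-T..T}"] by (simp add: ennreal_mult_less_top)
  finally show ?thesis .
qed

lemma ball_local_Lr_of_oscillation_bound:
  fixes f :: "real \<Rightarrow> 'a::euclidean_space \<Rightarrow> 'v::euclidean_space" and D :: "real \<Rightarrow> 'a \<Rightarrow> real"
  assumes r: "1 < r" "r \<le> q" and \<rho>: "0 < \<rho>" "\<rho> \<le> 1"
    and mf: "(\<lambda>(t,x). f t x) \<in> borel_measurable borel"
    and mD: "(\<lambda>(t,x). D t x) \<in> borel_measurable borel"
    and fD: "\<And>t x. norm (f t x) \<le> D t x"
    and osc: "\<And>t x0. (\<integral>\<^sup>+ y\<in>ball x0 \<rho>. (\<integral>\<^sup>+ z\<in>ball x0 \<rho>.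
        ennreal (norm (f t y - f t z) powr q) \<partial>lborel) \<partial>lborel) \<le> ennreal M0" "M0 \<ge> 0"
    and D_ae: "\<And>x0. AE t in lborel. (\<integral>\<^sup>+ y\<in>ball 0 1. ennreal (D t (x0 + y)) \<partial>lborel) < \<infinity>"
    and D_int: "\<And>x0 T. (\<integral>\<^sup>+ t\<in>{-T..T}.
        ennreal (enn2real (\<integral>\<^sup>+ y\<in>ball 0 1. ennreal (D t (x0 + y)) \<partial>lborel) powr r) \<partial>lborel) < \<infinity>"
  shows "ball_local_Lr r \<rho> f"
  unfolding ball_local_Lr_def
proof (intro allI)
  fix x0 T
  define I where "I t = (\<integral>\<^sup>+ y\<in>ball 0 1. ennreal (D t (x0 + y)) \<partial>lborel)" for t
  have [measurable]: "(\<lambda>(t,y). D t (x0 + y)) \<in> borel_measurable (lborel \<Otimes>\<^sub>M lborel)"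
    using borel_measurable_translate_snd[OF mD] by (simp add: borel_measurable_lborel_prod)
  have [measurable]: "ball (0::'a) 1 \<in> sets lborel" by simp
  have "I \<in> borel_measurable lborel"
    unfolding I_def by measurable
  moreover have "(\<integral>\<^sup>+ z\<in>ball x0 \<rho>. ennreal (norm (f t z)) \<partial>lborel) \<le> I t" for t
  proof -
    have [measurable]: "D t \<in> borel_measurable borel"
      using measurable_slice[of D lborel lborel t] mD
      by (simp add: borel_measurable_lborel_prod measurable_lborel1)
    have "(\<integral>\<^sup>+ z\<in>ball x0 \<rho>. ennreal (norm (f t z)) \<partial>lborel) \<le> (\<integral>\<^sup>+ z\<in>ball x0 1. ennreal (D t z) \<partial>lborel)"
      using fD \<rho>(2) by (intro nn_integral_mono mult_mono ennreal_leI) (auto simp: indicator_def)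
    also have "\<dots> = I t"
      unfolding I_def by (rule nn_integral_ball_translate[symmetric]) measurable
    finally show ?thesis .
  qed
  ultimately show "(\<integral>\<^sup>+ t\<in>{-T..T}. (\<integral>\<^sup>+ y\<in>ball x0 \<rho>. ennreal (norm (f t y) powr r) \<partial>lborel) \<partial>lborel) < \<infinity>"
    using ball_nn_integral_powr_finite[OF r \<rho>(1) _ osc, where I=I and T=T] mf D_ae[of x0] D_int[of x0 T]
    unfolding I_def by (simp add: borel_measurable_lborel_prod)
qed

lemma time_local_Lr_cutoff:
  fixes f :: "real \<Rightarrow> 'a::euclidean_space \<Rightarrow> 'v::euclidean_space" and \<psi> :: "'a \<Rightarrow> 'w::real_normed_vector"
  assumes r: "r > 0" and \<rho>: "\<rho> > 0"
    and mf: "(\<lambda>(t,x). f t x) \<in> borel_measurable (lborel \<Otimes>\<^sub>M lborel)"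
    and f: "ball_local_Lr r \<rho> f"
    and \<psi>: "continuous_on UNIV \<psi>" and S: "compact S" and \<psi>S: "\<And>x. x \<notin> S \<Longrightarrow> \<psi> x = 0"
  shows "time_local_Lr r (\<lambda>t x. norm (f t x) * norm (\<psi> x))"
  unfolding time_local_Lr_def
proof
  fix T
  obtain X where X: "finite X" "S \<subseteq> (\<Union>c\<in>X. ball c \<rho>)"
    using compactE_image[OF S, of S "\<lambda>c. ball c \<rho>"] \<rho> by (metis centre_in_ball open_ball UN_I subsetI)
  have "bounded (\<psi> ` S)"
    using compact_continuous_image[OF continuous_on_subset[OF \<psi> subset_UNIV] S] by (rule compact_imp_bounded)
  then obtain M where M: "\<And>x. norm (\<psi> x) \<le> M" "M \<ge> 0"
    using \<psi>S by (auto simp: bounded_iff) (metis norm_zero order.trans norm_ge_zero)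
  define G where "G c t = (\<integral>\<^sup>+ y\<in>ball c \<rho>. ennreal (norm (f t y) powr r) \<partial>lborel)" for c t
  have [measurable]: "(\<lambda>(t,y). f t y) \<in> borel_measurable (lborel \<Otimes>\<^sub>M lborel)" using mf .
  have mG[measurable]: "G c \<in> borel_measurable lborel" for c
  proof -
    have [measurable]: "ball c \<rho> \<in> sets lborel" by simp
    show ?thesis unfolding G_def by measurable
  qed
  have pointwise: "ennreal ((norm (f t x) * norm (\<psi> x)) powr r)
      \<le> (\<Sum>c\<in>X. ennreal (M powr r) * (ennreal (norm (f t x) powr r) * indicator (ball c \<rho>) x))" for t x
  proof (cases "x \<in> S")
    case True
    then obtain c where c: "c \<in> X" "x \<in> ball c \<rho>" using X(2) by auto
    have "(norm (f t x) * norm (\<psi> x)) powr r = norm (\<psi> x) powr r * norm (f t x) powr r"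
      by (simp add: powr_mult)
    also have "\<dots> \<le> M powr r * norm (f t x) powr r"
      using M r by (intro mult_right_mono powr_mono2) auto
    finally have "(norm (f t x) * norm (\<psi> x)) powr r \<le> M powr r * norm (f t x) powr r" .
    then have "ennreal ((norm (f t x) * norm (\<psi> x)) powr r)
        \<le> ennreal (M powr r) * (ennreal (norm (f t x) powr r) * indicator (ball c \<rho>) x)"
      using c by (simp add: ennreal_mult[symmetric])
    also have "\<dots> \<le> (\<Sum>c\<in>X. ennreal (M powr r) * (ennreal (norm (f t x) powr r) * indicator (ball c \<rho>) x))"
      by (rule member_le_sum) (use c X in auto)
    finally show ?thesis .
  qed (simp add: \<psi>S r)
  have inner: "(\<integral>\<^sup>+ x. ennreal ((norm (f t x) * norm (\<psi> x)) powr r) \<partial>lborel)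
      \<le> (\<Sum>c\<in>X. ennreal (M powr r) * G c t)" for t
  proof -
    have [measurable]: "f t \<in> borel_measurable lborel" using measurable_slice[OF mf] by simp
    have mi: "(\<lambda>x. ennreal (norm (f t x) powr r) * indicator (ball c \<rho>) x) \<in> borel_measurable lborel" for c
    proof -
      have [measurable]: "ball c \<rho> \<in> sets lborel" by simp
      show ?thesis by measurable
    qed
    have "(\<integral>\<^sup>+ x. ennreal ((norm (f t x) * norm (\<psi> x)) powr r) \<partial>lborel)
        \<le> (\<integral>\<^sup>+ x. (\<Sum>c\<in>X. ennreal (M powr r) * (ennreal (norm (f t x) powr r) * indicator (ball c \<rho>) x)) \<partial>lborel)"
      by (intro nn_integral_mono pointwise)
    also have "\<dots> = (\<Sum>c\<in>X. (\<integral>\<^sup>+ x. ennreal (M powr r) * (ennreal (norm (f t x) powr r) * indicator (ball c \<rho>) x) \<partial>lborel))"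
      using mi by (intro nn_integral_sum) auto
    also have "\<dots> = (\<Sum>c\<in>X. ennreal (M powr r) * G c t)"
      unfolding G_def using mi by (intro sum.cong refl nn_integral_cmult)
    finally show ?thesis .
  qed
  have "(\<integral>\<^sup>+ t\<in>{-T..T}. (\<integral>\<^sup>+ x. ennreal ((norm (f t x) * norm (\<psi> x)) powr r) \<partial>lborel) \<partial>lborel)
      \<le> (\<integral>\<^sup>+ t. (\<Sum>c\<in>X. ennreal (M powr r) * (G c t * indicator {-T..T} t)) \<partial>lborel)"
  proof (intro nn_integral_mono)
    fix t
    have "(\<Sum>c\<in>X. ennreal (M powr r) * (G c t * indicator {-T..T} t))
        = (\<Sum>c\<in>X. ennreal (M powr r) * G c t) * indicator {-T..T} t"
      by (simp add: sum_distrib_right mult.assoc)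
    then show "(\<integral>\<^sup>+ x. ennreal ((norm (f t x) * norm (\<psi> x)) powr r) \<partial>lborel) * indicator {-T..T} t
        \<le> (\<Sum>c\<in>X. ennreal (M powr r) * (G c t * indicator {-T..T} t))"
      using inner[of t] by (simp add: mult_right_mono)
  qed
  also have "\<dots> = (\<Sum>c\<in>X. ennreal (M powr r) * (\<integral>\<^sup>+ t\<in>{-T..T}. G c t \<partial>lborel))"
    using mG by (subst nn_integral_sum) (auto simp: nn_integral_cmult)
  also have "\<dots> < \<infinity>"
    using X(1) f unfolding G_def ball_local_Lr_def by (simp add: ennreal_sum_less_top ennreal_mult_less_top)
  finally show "(\<integral>\<^sup>+ t\<in>{-T..T}. (\<integral>\<^sup>+ x. ennreal (norm (norm (f t x) * norm (\<psi> x)) powr r) \<partial>lborel) \<partial>lborel) < \<infinity>"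
    by simp
qed

section \<open>Operators with dominated integrands\<close>

lemma ennreal_norm_integral_le:
  "ennreal (norm (integral\<^sup>L M f)) \<le> (\<integral>\<^sup>+ x. ennreal (norm (f x)) \<partial>M)"
  by (cases "integrable M f") (auto simp: integral_norm_bound_ennreal not_integrable_integral_eq)

lemma nn_integral_space_time_Young:
  fixes H u g :: "real \<Rightarrow> 'a::euclidean_space \<Rightarrow> real" and w :: "real \<Rightarrow> 'a \<Rightarrow> 'c::euclidean_space"
  assumes p: "p > 1" and r: "r = p / (p - 1)" and e: "e > 0"
    and [measurable]: "(\<lambda>(t,x). u t x) \<in> borel_measurable (lborel \<Otimes>\<^sub>M lborel)"
    and [measurable]: "(\<lambda>(t,x). w t x) \<in> borel_measurable (lborel \<Otimes>\<^sub>M lborel)"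
    and [measurable]: "(\<lambda>(t,x). g t x) \<in> borel_measurable (lborel \<Otimes>\<^sub>M lborel)"
    and g0: "\<And>t x. g t x \<ge> 0"
    and H: "\<And>t x. \<bar>H t x\<bar> \<le> g t x * (\<bar>u t x\<bar> + norm (w t x))"
    and S[measurable]: "S \<in> sets lborel"
  shows "(\<integral>\<^sup>+ t\<in>S. (\<integral>\<^sup>+ x. ennreal \<bar>H t x\<bar> \<partial>lborel) \<partial>lborel)
    \<le> ennreal (2 * e powr (-r) / r) * (\<integral>\<^sup>+ t\<in>S. (\<integral>\<^sup>+ x. ennreal (g t x powr r) \<partial>lborel) \<partial>lborel)
      + ennreal (e powr p / p) * (\<integral>\<^sup>+ t. (\<integral>\<^sup>+ x. ennreal (\<bar>u t x\<bar> powr p + norm (w t x) powr p) \<partial>lborel) \<partial>lborel)"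
proof -
  define A where "A = 2 * e powr (-r) / r"
  define B where "B = e powr p / p"
  have r0: "r > 0" using p unfolding r by simp
  have AB: "A \<ge> 0" "B \<ge> 0" using r0 p unfolding A_def B_def by auto
  define G where "G t x = ennreal (g t x powr r)" for t x
  define W where "W t x = ennreal (\<bar>u t x\<bar> powr p + norm (w t x) powr p)" for t x
  have [measurable]: "(\<lambda>(t,x). G t x) \<in> borel_measurable (lborel \<Otimes>\<^sub>M lborel)"
    "(\<lambda>(t,x). W t x) \<in> borel_measurable (lborel \<Otimes>\<^sub>M lborel)"
    unfolding G_def W_def by measurable
  have [measurable]: "G t \<in> borel_measurable lborel" "W t \<in> borel_measurable lborel" for t
    using measurable_slice[of G] measurable_slice[of W] by auto
  have pointwise: "ennreal \<bar>H t x\<bar> \<le> ennreal A * G t x + ennreal B * W t x" for t x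
  proof -
    have "g t x * \<bar>u t x\<bar> \<le> e powr (-r) * g t x powr r / r + e powr p * \<bar>u t x\<bar> powr p / p"
      "g t x * norm (w t x) \<le> e powr (-r) * g t x powr r / r + e powr p * norm (w t x) powr p / p"
      by (rule Youngs_inequality_scaled[OF p r g0 _ e], simp)+
    moreover have "A * g t x powr r + B * (\<bar>u t x\<bar> powr p + norm (w t x) powr p)
      = (e powr (-r) * g t x powr r / r + e powr p * \<bar>u t x\<bar> powr p / p)
        + (e powr (-r) * g t x powr r / r + e powr p * norm (w t x) powr p / p)"
      unfolding A_def B_def by (simp add: add_divide_distrib algebra_simps)
    ultimately have "\<bar>H t x\<bar> \<le> A * g t x powr r + B * (\<bar>u t x\<bar> powr p + norm (w t x) powr p)"
      using H[of t x] distrib_left[of "g t x" "\<bar>u t x\<bar>" "norm (w t x)"] by linarith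
    then show ?thesis
      using AB unfolding G_def W_def
      by (simp add: ennreal_mult[symmetric] ennreal_plus[symmetric] del: ennreal_plus)
  qed
  have "(\<integral>\<^sup>+ t\<in>S. (\<integral>\<^sup>+ x. ennreal \<bar>H t x\<bar> \<partial>lborel) \<partial>lborel)
      \<le> (\<integral>\<^sup>+ t\<in>S. (\<integral>\<^sup>+ x. ennreal A * G t x + ennreal B * W t x \<partial>lborel) \<partial>lborel)"
    by (intro nn_integral_mono mult_right_mono pointwise) auto
  also have "\<dots> = (\<integral>\<^sup>+ t\<in>S. (ennreal A * integral\<^sup>N lborel (G t) + ennreal B * integral\<^sup>N lborel (W t)) \<partial>lborel)"
    by (intro nn_integral_cong) (simp add: nn_integral_add nn_integral_cmult)
  also have "\<dots> = ennreal A * (\<integral>\<^sup>+ t\<in>S. integral\<^sup>N lborel (G t) \<partial>lborel)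
      + ennreal B * (\<integral>\<^sup>+ t\<in>S. integral\<^sup>N lborel (W t) \<partial>lborel)"
    by (simp add: distrib_right nn_integral_add nn_integral_cmult mult.assoc)
  also have "\<dots> \<le> ennreal A * (\<integral>\<^sup>+ t\<in>S. integral\<^sup>N lborel (G t) \<partial>lborel)
      + ennreal B * (\<integral>\<^sup>+ t. integral\<^sup>N lborel (W t) \<partial>lborel)"
    by (intro add_left_mono mult_left_mono nn_integral_mono) (auto simp: indicator_def)
  finally show ?thesis unfolding A_def B_def G_def W_def .
qed

lemma dominated_space_time_integrals:
  fixes H u g :: "real \<Rightarrow> 'a::euclidean_space \<Rightarrow> real" and w :: "real \<Rightarrow> 'a \<Rightarrow> 'c::euclidean_space"
  assumes p: "p > 1"
    and mu: "(\<lambda>(t,x). u t x) \<in> borel_measurable (lborel \<Otimes>\<^sub>M lborel)"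
    and mw: "(\<lambda>(t,x). w t x) \<in> borel_measurable (lborel \<Otimes>\<^sub>M lborel)"
    and uw: "(\<integral>\<^sup>+ t. (\<integral>\<^sup>+ x. ennreal (\<bar>u t x\<bar> powr p + norm (w t x) powr p) \<partial>lborel) \<partial>lborel) < \<infinity>"
    and mH[measurable]: "(\<lambda>(t,x). H t x) \<in> borel_measurable (lborel \<Otimes>\<^sub>M lborel)"
    and mg: "(\<lambda>(t,x). g t x) \<in> borel_measurable (lborel \<Otimes>\<^sub>M lborel)"
    and g0: "\<And>t x. g t x \<ge> 0" and g: "time_local_Lr (p / (p - 1)) g"
    and H: "\<And>t x. \<bar>H t x\<bar> \<le> g t x * (\<bar>u t x\<bar> + norm (w t x))"
  shows "(\<integral>\<^sup>+ t\<in>{-T..T}. (\<integral>\<^sup>+ x. ennreal \<bar>H t x\<bar> \<partial>lborel) \<partial>lborel) < \<infinity>"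
    and "AE t in lborel. integrable lborel (H t)"
proof -
  have fin: "(\<integral>\<^sup>+ t\<in>{-T..T}. (\<integral>\<^sup>+ x. ennreal \<bar>H t x\<bar> \<partial>lborel) \<partial>lborel) < \<infinity>" for T
  proof -
    have "(\<integral>\<^sup>+ t\<in>{-T..T}. (\<integral>\<^sup>+ x. ennreal \<bar>H t x\<bar> \<partial>lborel) \<partial>lborel)
      \<le> ennreal (2 * 1 powr (- (p / (p - 1))) / (p / (p - 1)))
          * (\<integral>\<^sup>+ t\<in>{-T..T}. (\<integral>\<^sup>+ x. ennreal (g t x powr (p / (p - 1))) \<partial>lborel) \<partial>lborel)
        + ennreal (1 powr p / p) * (\<integral>\<^sup>+ t. (\<integral>\<^sup>+ x. ennreal (\<bar>u t x\<bar> powr p + norm (w t x) powr p) \<partial>lborel) \<partial>lborel)"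
      by (rule nn_integral_space_time_Young[OF p refl _ mu mw mg g0 H]) auto
    also have "\<dots> < \<infinity>"
      using g uw g0 unfolding time_local_Lr_def by (simp add: ennreal_mult_less_top)
    finally show ?thesis .
  qed
  then show "(\<integral>\<^sup>+ t\<in>{-T..T}. (\<integral>\<^sup>+ x. ennreal \<bar>H t x\<bar> \<partial>lborel) \<partial>lborel) < \<infinity>" .
  have "AE t in lborel. (\<integral>\<^sup>+ x. ennreal \<bar>H t x\<bar> \<partial>lborel) * indicator {-real n..real n} t \<noteq> \<infinity>" for n :: nat
    by (rule nn_integral_PInf_AE) (use fin[of "real n"] in auto)
  then have "AE t in lborel. \<forall>n::nat. (\<integral>\<^sup>+ x. ennreal \<bar>H t x\<bar> \<partial>lborel) * indicator {-real n..real n} t \<noteq> \<infinity>"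
    by (simp add: AE_all_countable)
  then show "AE t in lborel. integrable lborel (H t)"
  proof (rule eventually_mono)
    fix t
    assume "\<forall>n::nat. (\<integral>\<^sup>+ x. ennreal \<bar>H t x\<bar> \<partial>lborel) * indicator {-real n..real n} t \<noteq> \<infinity>"
    moreover obtain n :: nat where "\<bar>t\<bar> \<le> real n" using real_arch_simple by blast
    then have "t \<in> {-real n..real n}" by auto
    ultimately have "(\<integral>\<^sup>+ x. ennreal \<bar>H t x\<bar> \<partial>lborel) \<noteq> \<infinity>" by (auto dest: spec[of _ n])
    then show "integrable lborel (H t)"
      using measurable_slice[OF mH] by (intro integrableI_bounded) (auto simp: top.not_eq_extremum)
  qed
qed

lemma borel_measurable_interval_integral_from_0:
  fixes F :: "real \<Rightarrow> real"
  assumes [measurable]: "F \<in> borel_measurable lborel"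
  shows "(\<lambda>s. LBINT t=0..s. F t) \<in> borel_measurable lborel"
proof -
  \<comment> \<open>signed indicator of the oriented interval between 0 and \<open>s\<close>\<close>
  define K where "K s t = (if 0 \<le> s \<and> 0 < t \<and> t < s then 1
    else if s < 0 \<and> s < t \<and> t < 0 then -1 else (0::real))" for s t :: real
  have "(LBINT t=0..s. F t) = (LBINT t. K s t * F t)" for s
  proof (cases "0 \<le> s")
    case True
    then show ?thesis
      by (simp add: interval_lebesgue_integral_def set_lebesgue_integral_def zero_ereal_def)
        (intro Bochner_Integration.integral_cong, auto simp: K_def indicator_def)
  next
    case False
    then have "(LBINT t=0..s. F t) = (LBINT t. - (indicator {s<..<0} t * F t))"
      by (simp add: interval_lebesgue_integral_def set_lebesgue_integral_def zero_ereal_def)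
    also have "\<dots> = (LBINT t. K s t * F t)"
      using False by (intro Bochner_Integration.integral_cong) (auto simp: K_def indicator_def)
    finally show ?thesis .
  qed
  moreover have "(\<lambda>(s,t). K s t * F t) \<in> borel_measurable (lborel \<Otimes>\<^sub>M lborel)"
    unfolding K_def by measurable
  ultimately show ?thesis
    using lborel.borel_measurable_lebesgue_integral by simp
qed

lemma abs_interval_integral_from_0_le:
  fixes F :: "real \<Rightarrow> real" and s :: real
  assumes s: "s \<in> {-T..T}"
  shows "ennreal \<bar>LBINT t=0..s. F t\<bar> \<le> (\<integral>\<^sup>+ t\<in>{-T..T}. ennreal \<bar>F t\<bar> \<partial>lborel)"
proof -
  have *: "ennreal \<bar>LINT t|lborel. indicator A t *\<^sub>R F t\<bar> \<le> (\<integral>\<^sup>+ t\<in>{-T..T}. ennreal \<bar>F t\<bar> \<partial>lborel)"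
    if "A \<subseteq> {-T..T}" for A
  proof -
    have "ennreal \<bar>LINT t|lborel. indicator A t *\<^sub>R F t\<bar> \<le> (\<integral>\<^sup>+ t. ennreal (norm (indicator A t *\<^sub>R F t)) \<partial>lborel)"
      using ennreal_norm_integral_le[of lborel "\<lambda>t. indicator A t *\<^sub>R F t"] by simp
    also have "\<dots> \<le> (\<integral>\<^sup>+ t\<in>{-T..T}. ennreal \<bar>F t\<bar> \<partial>lborel)"
      using that by (intro nn_integral_mono) (auto simp: indicator_def)
    finally show ?thesis .
  qed
  have "{0<..<s} \<subseteq> {-T..T}" "{s<..<0} \<subseteq> {-T..T}" using s by auto
  from this[THEN *] show ?thesis
    by (simp add: interval_lebesgue_integral_def set_lebesgue_integral_def zero_ereal_def)
qed

lemma interval_lebesgue_integrable_from_0: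
  fixes F :: "real \<Rightarrow> real" and s :: real
  assumes [measurable]: "F \<in> borel_measurable lborel"
    and fin: "(\<integral>\<^sup>+ t\<in>{-T..T}. ennreal \<bar>F t\<bar> \<partial>lborel) < \<infinity>" and s: "s \<in> {-T..T}"
  shows "interval_lebesgue_integrable lborel 0 s F"
proof -
  have *: "set_integrable lborel A F" if A: "A \<subseteq> {-T..T}" "A \<in> sets lborel" for A
    unfolding set_integrable_def
  proof (rule integrableI_bounded)
    show "(\<lambda>x. indicat_real A x *\<^sub>R F x) \<in> borel_measurable lborel"
      using A by measurable
    have "(\<integral>\<^sup>+ x. ennreal (norm (indicat_real A x *\<^sub>R F x)) \<partial>lborel) \<le> (\<integral>\<^sup>+ t\<in>{-T..T}. ennreal \<bar>F t\<bar> \<partial>lborel)"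
      using A(1) by (intro nn_integral_mono) (auto simp: indicator_def subset_iff)
    with fin show "(\<integral>\<^sup>+ x. ennreal (norm (indicat_real A x *\<^sub>R F x)) \<partial>lborel) < \<infinity>"
      by (rule le_less_trans[rotated])
  qed
  then show ?thesis
    using s by (auto simp: interval_lebesgue_integrable_def zero_ereal_def intro!: *)
qed

lemma nn_integral_powr_le_uniform_bound:
  fixes G :: "real \<Rightarrow> real"
  assumes "\<And>s. s \<in> {-T..T} \<Longrightarrow> \<bar>G s\<bar> \<le> c" "c \<ge> 0" "p > 0" "T \<ge> 0"
  shows "(\<integral>\<^sup>+ s\<in>{-T..T}. ennreal (\<bar>G s\<bar> powr p) \<partial>lborel) \<le> ennreal (2 * T * c powr p)"
proof -
  have "(\<integral>\<^sup>+ s\<in>{-T..T}. ennreal (\<bar>G s\<bar> powr p) \<partial>lborel) \<le> (\<integral>\<^sup>+ s\<in>{-T..T}. ennreal (c powr p) \<partial>lborel)"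
    using assms by (intro nn_integral_mono) (auto simp: indicator_def intro!: ennreal_leI powr_mono2)
  also have "\<dots> = ennreal (2 * T * c powr p)"
    using assms by (simp add: nn_integral_cmult_indicator ennreal_mult[symmetric] mult.commute)
  finally show ?thesis .
qed

locale dominated_operator =
  fixes p T :: real
    and h :: "(real \<Rightarrow> real^'d::finite \<Rightarrow> real) \<Rightarrow> (real \<Rightarrow> real^'d \<Rightarrow> real^'d) \<Rightarrow> real \<Rightarrow> real^'d \<Rightarrow> real"
    and g :: "real \<Rightarrow> real^'d \<Rightarrow> real"
  assumes p: "1 < p" and T: "0 < T"
    and h_diff: "\<And>u Du v Dv t x.
      h u Du t x - h v Dv t x = h (\<lambda>t x. u t x - v t x) (\<lambda>t x. Du t x - Dv t x) t x"
    and h_bound: "\<And>u Du t x. \<bar>h u Du t x\<bar> \<le> g t x * (\<bar>u t x\<bar> + norm (Du t x))"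
    and h_meas: "\<And>u Du. (\<lambda>(t,x). u t x) \<in> borel_measurable (lborel \<Otimes>\<^sub>M lborel) \<Longrightarrow>
      (\<lambda>(t,x). Du t x) \<in> borel_measurable (lborel \<Otimes>\<^sub>M lborel) \<Longrightarrow>
      (\<lambda>(t,x). h u Du t x) \<in> borel_measurable (lborel \<Otimes>\<^sub>M lborel)"
    and g_meas: "(\<lambda>(t,x). g t x) \<in> borel_measurable (lborel \<Otimes>\<^sub>M lborel)"
    and g_nonneg: "\<And>t x. g t x \<ge> 0"
    and g_Lr: "time_local_Lr (p / (p - 1)) g"
begin

definition space_integral :: "(real \<Rightarrow> real^'d \<Rightarrow> real) \<Rightarrow> (real \<Rightarrow> real^'d \<Rightarrow> real^'d) \<Rightarrow> real \<Rightarrow> real"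
  where "space_integral u Du t = (LINT x|lborel. h u Du t x)"

definition time_integral :: "(real \<Rightarrow> real^'d \<Rightarrow> real) \<Rightarrow> (real \<Rightarrow> real^'d \<Rightarrow> real^'d) \<Rightarrow> real \<Rightarrow> real"
  where "time_integral u Du s = (LBINT t=0..s. space_integral u Du t)"

definition abs_integral :: "(real \<Rightarrow> real^'d \<Rightarrow> real) \<Rightarrow> (real \<Rightarrow> real^'d \<Rightarrow> real^'d) \<Rightarrow> ennreal"
  where "abs_integral u Du = (\<integral>\<^sup>+ t\<in>{-T..T}. (\<integral>\<^sup>+ x. ennreal \<bar>h u Du t x\<bar> \<partial>lborel) \<partial>lborel)"

lemma in_W_measurable:
  assumes "in_W p u Du"
  shows "(\<lambda>(t,x). u t x) \<in> borel_measurable (lborel \<Otimes>\<^sub>M lborel)"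
    and "(\<lambda>(t,x). Du t x) \<in> borel_measurable (lborel \<Otimes>\<^sub>M lborel)"
  using assms unfolding in_W_def by auto

lemma abs_integral_finite_and_AE_integrable:
  assumes "in_W p u Du"
  shows "abs_integral u Du < \<infinity>" and "AE t in lborel. integrable lborel (h u Du t)"
  using dominated_space_time_integrals[OF p _ _ _ h_meas g_meas g_nonneg g_Lr h_bound] assms
  unfolding in_W_def abs_integral_def by auto

lemma borel_measurable_space_integral:
  assumes "in_W p u Du"
  shows "space_integral u Du \<in> borel_measurable lborel"
  using lborel.borel_measurable_lebesgue_integral[OF h_meas[OF in_W_measurable[OF assms]]]
  unfolding space_integral_def by simp

lemma nn_integral_abs_le_abs_integral:
  assumes "AE t in lborel. \<bar>F t\<bar> \<le> \<bar>space_integral u Du t\<bar>"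
  shows "(\<integral>\<^sup>+ t\<in>{-T..T}. ennreal \<bar>F t\<bar> \<partial>lborel) \<le> abs_integral u Du"
  unfolding abs_integral_def using assms
proof (intro nn_integral_mono_AE, eventually_elim)
  case (elim t)
  have "ennreal \<bar>F t\<bar> \<le> ennreal \<bar>space_integral u Du t\<bar>"
    using elim by (auto intro: ennreal_leI)
  also have "\<dots> \<le> (\<integral>\<^sup>+ x. ennreal \<bar>h u Du t x\<bar> \<partial>lborel)"
    using ennreal_norm_integral_le[of lborel "h u Du t"] unfolding space_integral_def by simp
  finally show ?case by (intro mult_right_mono) auto
qed

lemma abs_interval_integral_le_abs_integral:
  fixes s :: real
  assumes "s \<in> {-T..T}" and "AE t in lborel. \<bar>F t\<bar> \<le> \<bar>space_integral u Du t\<bar>"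
  shows "ennreal \<bar>LBINT t=0..s. F t\<bar> \<le> abs_integral u Du"
  using abs_interval_integral_from_0_le[OF assms(1)] nn_integral_abs_le_abs_integral[OF assms(2)]
  by (rule order_trans)

lemma interval_integrable_space_integral:
  fixes s :: real
  assumes u: "in_W p u Du" and s: "s \<in> {-T..T}"
  shows "interval_lebesgue_integrable lborel 0 s (space_integral u Du)"
proof (rule interval_lebesgue_integrable_from_0[OF borel_measurable_space_integral[OF u] _ s])
  show "(\<integral>\<^sup>+ t\<in>{-T..T}. ennreal \<bar>space_integral u Du t\<bar> \<partial>lborel) < \<infinity>"
    using nn_integral_abs_le_abs_integral[where F="space_integral u Du" and u=u and Du=Du]
      abs_integral_finite_and_AE_integrable(1)[OF u]
    by (simp add: le_less_trans)
qed

lemma time_integral_wellposed: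
  assumes u: "in_W p u Du"
  shows "(AE t in lborel. integrable lborel (h u Du t)) \<and>
    (\<forall>s\<in>{-T..T}. interval_lebesgue_integrable lborel 0 s (space_integral u Du)) \<and>
    time_integral u Du \<in> borel_measurable (restrict_space lborel {-T..T}) \<and>
    (\<integral>\<^sup>+ s\<in>{-T..T}. ennreal (\<bar>time_integral u Du s\<bar> powr p) \<partial>lborel) < \<infinity>"
proof (intro conjI ballI)
  show "AE t in lborel. integrable lborel (h u Du t)"
    using abs_integral_finite_and_AE_integrable(2)[OF u] .
  show "interval_lebesgue_integrable lborel 0 s (space_integral u Du)" if "s \<in> {-T..T}" for s
    using interval_integrable_space_integral[OF u that] .
  show "time_integral u Du \<in> borel_measurable (restrict_space lborel {-T..T})"
    unfolding time_integral_def
    by (intro measurable_restrict_space1 borel_measurable_interval_integral_from_0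
        borel_measurable_space_integral[OF u])
  define c where "c = enn2real (abs_integral u Du)"
  have triv: "AE t in lborel. \<bar>space_integral u Du t\<bar> \<le> \<bar>space_integral u Du t\<bar>" by simp
  have "\<bar>time_integral u Du s\<bar> \<le> c" if "s \<in> {-T..T}" for s
    using abs_interval_integral_le_abs_integral[OF that triv] abs_integral_finite_and_AE_integrable(1)[OF u]
      enn2real_mono[of "ennreal \<bar>time_integral u Du s\<bar>" "abs_integral u Du"]
    unfolding c_def time_integral_def by simp
  then have "(\<integral>\<^sup>+ s\<in>{-T..T}. ennreal (\<bar>time_integral u Du s\<bar> powr p) \<partial>lborel) \<le> ennreal (2 * T * c powr p)"
    using p T by (intro nn_integral_powr_le_uniform_bound) (auto simp: c_def)
  then show "(\<integral>\<^sup>+ s\<in>{-T..T}. ennreal (\<bar>time_integral u Du s\<bar> powr p) \<partial>lborel) < \<infinity>"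
    by (simp add: le_less_trans)
qed

lemma abs_time_integral_diff_le:
  fixes s :: real
  assumes u: "in_W p u Du" and v: "in_W p v Dv" and s: "s \<in> {-T..T}"
  shows "ennreal \<bar>time_integral u Du s - time_integral v Dv s\<bar>
    \<le> abs_integral (\<lambda>t x. u t x - v t x) (\<lambda>t x. Du t x - Dv t x)"
proof -
  have "time_integral u Du s - time_integral v Dv s
      = (LBINT t=0..s. space_integral u Du t - space_integral v Dv t)"
    unfolding time_integral_def
    by (rule interval_lebesgue_integral_diff(2)[symmetric])
      (use interval_integrable_space_integral u v s in auto)
  moreover have "AE t in lborel. space_integral u Du t - space_integral v Dv t
      = space_integral (\<lambda>t x. u t x - v t x) (\<lambda>t x. Du t x - Dv t x) t"
    using abs_integral_finite_and_AE_integrable(2)[OF u] abs_integral_finite_and_AE_integrable(2)[OF v]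
  proof eventually_elim
    case (elim t)
    then have "space_integral u Du t - space_integral v Dv t = (LINT x|lborel. h u Du t x - h v Dv t x)"
      unfolding space_integral_def by simp
    also have "\<dots> = space_integral (\<lambda>t x. u t x - v t x) (\<lambda>t x. Du t x - Dv t x) t"
      unfolding space_integral_def h_diff ..
    finally show ?case .
  qed
  ultimately show ?thesis
    using abs_interval_integral_le_abs_integral[OF s] by (simp add: eventually_mono)
qed

lemma abs_integral_diff_le_Young:
  assumes u: "in_W p u Du" and v: "in_W p v Dv" and e: "e > 0"
  shows "abs_integral (\<lambda>t x. u t x - v t x) (\<lambda>t x. Du t x - Dv t x)
    \<le> ennreal (2 * e powr (- (p / (p - 1))) / (p / (p - 1)))
        * (\<integral>\<^sup>+ t\<in>{-T..T}. (\<integral>\<^sup>+ x. ennreal (g t x powr (p / (p - 1))) \<partial>lborel) \<partial>lborel)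
      + ennreal (e powr p / p) * W_dist p u Du v Dv"
proof -
  have "(\<lambda>(t,x). u t x - v t x) \<in> borel_measurable (lborel \<Otimes>\<^sub>M lborel)"
    "(\<lambda>(t,x). Du t x - Dv t x) \<in> borel_measurable (lborel \<Otimes>\<^sub>M lborel)"
    using borel_measurable_diff[OF in_W_measurable(1)[OF u] in_W_measurable(1)[OF v]]
      borel_measurable_diff[OF in_W_measurable(2)[OF u] in_W_measurable(2)[OF v]]
    by (simp_all add: case_prod_beta)
  then show ?thesis
    unfolding abs_integral_def W_dist_def
    by (intro nn_integral_space_time_Young[OF p refl e _ _ g_meas g_nonneg h_bound]) auto
qed

lemma time_integral_continuous:
  assumes u: "in_W p u Du" and \<epsilon>: "\<epsilon> > 0"
  shows "\<exists>\<delta>>0. \<forall>v Dv. in_W p v Dv \<longrightarrow> W_dist p u Du v Dv < ennreal \<delta> \<longrightarrow>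
    Lp_dist p T (time_integral u Du) (time_integral v Dv) < ennreal \<epsilon>"
proof -
  define r where "r = p / (p - 1)"
  have r0: "r > 0" using p unfolding r_def by simp
  have "(\<integral>\<^sup>+ t\<in>{-T..T}. (\<integral>\<^sup>+ x. ennreal (g t x powr r) \<partial>lborel) \<partial>lborel) < \<infinity>"
    using g_Lr g_nonneg unfolding time_local_Lr_def r_def by simp
  then obtain G where G: "(\<integral>\<^sup>+ t\<in>{-T..T}. (\<integral>\<^sup>+ x. ennreal (g t x powr r) \<partial>lborel) \<partial>lborel) = ennreal G" "G \<ge> 0"
    by (cases "\<integral>\<^sup>+ t\<in>{-T..T}. (\<integral>\<^sup>+ x. ennreal (g t x powr r) \<partial>lborel) \<partial>lborel") auto
  define \<eta> where "\<eta> = (\<epsilon> / (4 * T)) powr (1 / p)"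
  have \<eta>0: "\<eta> > 0" unfolding \<eta>_def using \<epsilon> T by simp
  have \<eta>p: "2 * T * \<eta> powr p < \<epsilon>"
    unfolding \<eta>_def using p \<epsilon> T by (simp add: powr_powr)
  \<comment> \<open>a large Young parameter makes the coefficient term small; the W-distance controls the rest\<close>
  obtain e where e: "e > 0" "2 * e powr (- r) / r * G < \<eta> / 2"
    using Young_coefficient_small[OF r0 G(2), of "\<eta> / 2"] \<eta>0 by auto
  define B where "B = e powr p / p"
  have B0: "B > 0" unfolding B_def using e p by simp
  show ?thesis
  proof (intro exI[of _ "\<eta> / (2 * B)"] conjI allI impI)
    show "\<eta> / (2 * B) > 0" using \<eta>0 B0 by simp
    fix v Dv assume v: "in_W p v Dv" and "W_dist p u Du v Dv < ennreal (\<eta> / (2 * B))"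
    then obtain w where w: "W_dist p u Du v Dv = ennreal w" "0 \<le> w" "w < \<eta> / (2 * B)"
      by (cases "W_dist p u Du v Dv") (auto simp: ennreal_less_iff)
    define m where "m = 2 * e powr (- r) / r * G + B * w"
    have "B * w < \<eta> / 2" using w(3) B0 by (simp add: field_simps)
    then have m: "0 \<le> m" "m < \<eta>"
      using e G(2) w(2) B0 r0 unfolding m_def by auto
    have "\<bar>time_integral u Du s - time_integral v Dv s\<bar> \<le> m" if "s \<in> {-T..T}" for s
    proof -
      have "0 \<le> 2 * e powr (- r) * G / r" "0 \<le> e powr p * w / p"
        using G(2) w(2) r0 p by auto
      then have "ennreal \<bar>time_integral u Du s - time_integral v Dv s\<bar> \<le> ennreal m"
        using order_trans[OF abs_time_integral_diff_le[OF u v that] abs_integral_diff_le_Young[OF u v e(1)]]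
          G w B0 e r0 p unfolding m_def B_def r_def[symmetric]
        by (simp add: ennreal_mult[symmetric] ennreal_plus[symmetric] del: ennreal_plus)
      then show ?thesis using m(1) by simp
    qed
    then have "Lp_dist p T (time_integral u Du) (time_integral v Dv) \<le> ennreal (2 * T * m powr p)"
      unfolding Lp_dist_def using m(1) p T by (intro nn_integral_powr_le_uniform_bound) auto
    also have "\<dots> < ennreal \<epsilon>"
    proof (rule ennreal_lessI[OF \<epsilon>])
      have "m powr p < \<eta> powr p" using m p by (intro powr_less_mono2) auto
      then have "2 * T * m powr p < 2 * T * \<eta> powr p" using T by simp
      then show "2 * T * m powr p < \<epsilon>" using \<eta>p by simp
    qed
    finally show "Lp_dist p T (time_integral u Du) (time_integral v Dv) < ennreal \<epsilon>" .
  qed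
qed

theorem cont_op: "cont_op p T h"
  using time_integral_wellposed time_integral_continuous
  unfolding cont_op_def Let_def time_integral_def space_integral_def by blast

end

lemma cont_op_multiplication:
  fixes \<kappa> :: "real \<Rightarrow> real^'d::finite \<Rightarrow> real"
  assumes p: "1 < p" and T: "0 < T"
    and m\<kappa>[measurable]: "(\<lambda>(t,x). \<kappa> t x) \<in> borel_measurable (lborel \<Otimes>\<^sub>M lborel)"
    and \<kappa>: "time_local_Lr (p / (p - 1)) \<kappa>"
  shows "cont_op p T (\<lambda>u Du t x. u t x * \<kappa> t x)"
proof (rule dominated_operator.cont_op[where g="\<lambda>t x. \<bar>\<kappa> t x\<bar>"], unfold_locales)
  show "u t x * \<kappa> t x - v t x * \<kappa> t x = (u t x - v t x) * \<kappa> t x"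
    for u v :: "real \<Rightarrow> real^'d \<Rightarrow> real" and t x
    by (simp add: algebra_simps)
  show "\<bar>u t x * \<kappa> t x\<bar> \<le> \<bar>\<kappa> t x\<bar> * (\<bar>u t x\<bar> + norm (Du t x))"
    for u :: "real \<Rightarrow> real^'d \<Rightarrow> real" and Du :: "real \<Rightarrow> real^'d \<Rightarrow> real^'d" and t x
    by (simp add: abs_mult mult.commute mult_left_mono)
  show "(\<lambda>(t,x). u t x * \<kappa> t x) \<in> borel_measurable (lborel \<Otimes>\<^sub>M lborel)"
    if [measurable]: "(\<lambda>(t,x). u t x) \<in> borel_measurable (lborel \<Otimes>\<^sub>M lborel)"
    for u :: "real \<Rightarrow> real^'d \<Rightarrow> real"
    by measurable
  show "time_local_Lr (p / (p - 1)) (\<lambda>t x. \<bar>\<kappa> t x\<bar>)"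
    using \<kappa> by (simp add: time_local_Lr_def)
qed (use p T in auto)

lemma cont_op_inner_gradient:
  fixes \<beta> :: "real \<Rightarrow> real^'d::finite \<Rightarrow> real^'d"
  assumes p: "1 < p" and T: "0 < T"
    and m\<beta>[measurable]: "(\<lambda>(t,x). \<beta> t x) \<in> borel_measurable (lborel \<Otimes>\<^sub>M lborel)"
    and \<beta>: "time_local_Lr (p / (p - 1)) \<beta>"
  shows "cont_op p T (\<lambda>u Du t x. \<beta> t x \<bullet> Du t x)"
proof (rule dominated_operator.cont_op[where g="\<lambda>t x. norm (\<beta> t x)"], unfold_locales)
  show "\<beta> t x \<bullet> Du t x - \<beta> t x \<bullet> Dv t x = \<beta> t x \<bullet> (Du t x - Dv t x)"
    for Du Dv :: "real \<Rightarrow> real^'d \<Rightarrow> real^'d" and t x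
    by (simp add: inner_diff_right)
  show "\<bar>\<beta> t x \<bullet> Du t x\<bar> \<le> norm (\<beta> t x) * (\<bar>u t x\<bar> + norm (Du t x))"
    for u :: "real \<Rightarrow> real^'d \<Rightarrow> real" and Du :: "real \<Rightarrow> real^'d \<Rightarrow> real^'d" and t x
    using Cauchy_Schwarz_ineq2[of "\<beta> t x" "Du t x"]
    by (smt (verit) abs_ge_zero mult_left_mono norm_ge_zero)
  show "(\<lambda>(t,x). \<beta> t x \<bullet> Du t x) \<in> borel_measurable (lborel \<Otimes>\<^sub>M lborel)"
    if [measurable]: "(\<lambda>(t,x). Du t x) \<in> borel_measurable (lborel \<Otimes>\<^sub>M lborel)"
    for Du :: "real \<Rightarrow> real^'d \<Rightarrow> real^'d"
    by measurable
  show "time_local_Lr (p / (p - 1)) (\<lambda>t x. norm (\<beta> t x))"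
    using \<beta> by (simp add: time_local_Lr_def)
qed (use p T in auto)

lemma test_fn_continuous:
  assumes "test_fn \<phi>"
  shows "continuous_on UNIV \<phi>" and "continuous_on UNIV (grad \<phi>)"
proof -
  have "smooth_fn \<phi>" using assms unfolding test_fn_def by simp
  then have "continuous_on UNIV \<phi>" and "smooth_fn (partial i \<phi>)" for i
    by (auto elim: smooth_fn.cases)
  moreover from this(2) have "continuous_on UNIV (partial i \<phi>)" for i
    by (auto elim: smooth_fn.cases)
  ultimately show "continuous_on UNIV \<phi>" "continuous_on UNIV (grad \<phi>)"
    unfolding grad_def by (auto intro: continuous_on_vec_lambda)
qed

lemma grad_eq_0_outside_support:
  fixes \<phi> :: "real^'d::finite \<Rightarrow> real"
  assumes x: "x \<notin> closure {x. \<phi> x \<noteq> 0}"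
  shows "grad \<phi> x = 0"
proof -
  obtain e where e: "e > 0" "ball x e \<subseteq> - closure {x. \<phi> x \<noteq> 0}"
    using x open_contains_ball[of "- closure {x. \<phi> x \<noteq> 0}"] by blast
  have "partial i \<phi> x = 0" for i
  proof -
    have "\<forall>\<^sub>F s in nhds 0. \<phi> (x + s *\<^sub>R axis i 1) = 0"
      unfolding eventually_nhds_metric
    proof (intro exI[of _ e] conjI allI impI e(1))
      fix s :: real assume "dist s 0 < e"
      then have "x + s *\<^sub>R axis i 1 \<in> ball x e" by (simp add: dist_norm)
      then have "x + s *\<^sub>R axis i 1 \<notin> closure {x. \<phi> x \<noteq> 0}" using e by auto
      then show "\<phi> (x + s *\<^sub>R axis i 1) = 0" using closure_subset[of "{x. \<phi> x \<noteq> 0}"] by auto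
    qed
    then have "((\<lambda>s. \<phi> (x + s *\<^sub>R axis i 1)) has_field_derivative 0) (at 0)
        \<longleftrightarrow> ((\<lambda>_. 0::real) has_field_derivative 0) (at 0)"
      by (intro DERIV_cong_ev) auto
    then have "((\<lambda>s. \<phi> (x + s *\<^sub>R axis i 1)) has_field_derivative 0) (at 0)"
      by simp
    then show ?thesis unfolding partial_def by (rule DERIV_imp_deriv)
  qed
  then show ?thesis unfolding grad_def by (simp add: vec_eq_iff)
qed

lemma borel_measurable_test_fn:
  assumes "test_fn \<phi>"
  shows "\<phi> \<in> borel_measurable lborel" and "grad \<phi> \<in> borel_measurable lborel"
  using test_fn_continuous[OF assms, THEN borel_measurable_continuous_onI] by simp_all

lemma time_local_Lr_test_fn_cutoff:
  fixes f :: "real \<Rightarrow> real^'d::finite \<Rightarrow> 'v::euclidean_space"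
  assumes \<phi>: "test_fn \<phi>" and r: "r > 0" and \<rho>: "\<rho> > 0"
    and mf: "(\<lambda>(t,x). f t x) \<in> borel_measurable (lborel \<Otimes>\<^sub>M lborel)" and f: "ball_local_Lr r \<rho> f"
  shows "time_local_Lr r (\<lambda>t x. norm (f t x) * norm (\<phi> x))"
    and "time_local_Lr r (\<lambda>t x. norm (f t x) * norm (grad \<phi> x))"
proof -
  have S: "compact (closure {x. \<phi> x \<noteq> 0})"
    using \<phi> unfolding test_fn_def by simp
  have "\<phi> x = 0" if "x \<notin> closure {x. \<phi> x \<noteq> 0}" for x
    using that closure_subset[of "{x. \<phi> x \<noteq> 0}"] by auto
  then show "time_local_Lr r (\<lambda>t x. norm (f t x) * norm (\<phi> x))"
    by (rule time_local_Lr_cutoff[OF r \<rho> mf f test_fn_continuous(1)[OF \<phi>] S])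
  show "time_local_Lr r (\<lambda>t x. norm (f t x) * norm (grad \<phi> x))"
    by (rule time_local_Lr_cutoff[OF r \<rho> mf f test_fn_continuous(2)[OF \<phi>] S grad_eq_0_outside_support])
qed

lemma assumption_A_measurable:
  assumes "assumption_A p a bb b c"
  shows "(\<lambda>(t,x). bb t x) \<in> borel_measurable (lborel \<Otimes>\<^sub>M lborel)"
    and "(\<lambda>(t,x). b t x) \<in> borel_measurable (lborel \<Otimes>\<^sub>M lborel)"
    and "(\<lambda>(t,x). c t x) \<in> borel_measurable (lborel \<Otimes>\<^sub>M lborel)"
  using assms unfolding assumption_A_def borel_measurable_lborel_prod by blast+

lemma assumptions_AB_ball_local_Lr:
  fixes bb b :: "real \<Rightarrow> real^'d::finite \<Rightarrow> real^'d" and c :: "real \<Rightarrow> real^'d \<Rightarrow> real"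
  assumes p: "1 < p" and K: "0 \<le> K" and \<rho>1: "0 < \<rho>1" "\<rho>1 \<le> 1" and q: "p / (p - 1) \<le> q"
    and \<gamma>: "0 \<le> \<gamma>" and A: "assumption_A p a bb b c" and B: "assumption_B q K \<rho>1 \<gamma> bb b c"
  shows "ball_local_Lr (p / (p - 1)) \<rho>1 bb \<and> ball_local_Lr (p / (p - 1)) \<rho>1 b
    \<and> ball_local_Lr (p / (p - 1)) \<rho>1 c"
proof -
  have r: "1 < p / (p - 1)" "p / (p - 1) \<le> q" using p q by (simp_all add: less_divide_eq)
  define D where "D t x = norm (bb t x) + norm (b t x) + c t x" for t x
  define M0 where "M0 = (if q > real CARD('d) then K else 0) + \<rho>1 ^ CARD('d) * \<gamma>"
  have M0: "M0 \<ge> 0" unfolding M0_def using K \<rho>1 \<gamma> by simp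
  have m: "(\<lambda>(t,x). bb t x) \<in> borel_measurable borel"
    "(\<lambda>(t,x). b t x) \<in> borel_measurable borel" "(\<lambda>(t,x). c t x) \<in> borel_measurable borel"
    and c0: "\<And>t x. c t x \<ge> 0"
    and D_ae: "\<And>x0. AE t in lborel. (\<integral>\<^sup>+ y\<in>ball 0 1. ennreal (D t (x0 + y)) \<partial>lborel) < \<infinity>"
    and D_int: "\<And>x0 T. (\<integral>\<^sup>+ t\<in>{-T..T}.
        ennreal (enn2real (\<integral>\<^sup>+ y\<in>ball 0 1. ennreal (D t (x0 + y)) \<partial>lborel) powr (p / (p - 1))) \<partial>lborel) < \<infinity>"
    using A unfolding assumption_A_def D_def Let_def by blast+
  have "(\<lambda>(t,x). D t x) \<in> borel_measurable (lborel \<Otimes>\<^sub>M lborel)"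
  proof -
    note [measurable] = assumption_A_measurable[OF A]
    show ?thesis unfolding D_def by measurable
  qed
  then have mD: "(\<lambda>(t,x). D t x) \<in> borel_measurable borel"
    by (simp add: borel_measurable_lborel_prod)
  have osc: "(\<integral>\<^sup>+ y\<in>ball x0 \<rho>1. (\<integral>\<^sup>+ z\<in>ball x0 \<rho>1. ennreal (norm (bb t y - bb t z) powr q
      + norm (b t y - b t z) powr q + \<bar>c t y - c t z\<bar> powr q) \<partial>lborel) \<partial>lborel) \<le> ennreal M0" for t x0
    using B unfolding assumption_B_def M0_def by blast
  have osc_bb: "(\<integral>\<^sup>+ y\<in>ball x0 \<rho>1. (\<integral>\<^sup>+ z\<in>ball x0 \<rho>1.
      ennreal (norm (bb t y - bb t z) powr q) \<partial>lborel) \<partial>lborel) \<le> ennreal M0"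
    and osc_b: "(\<integral>\<^sup>+ y\<in>ball x0 \<rho>1. (\<integral>\<^sup>+ z\<in>ball x0 \<rho>1.
      ennreal (norm (b t y - b t z) powr q) \<partial>lborel) \<partial>lborel) \<le> ennreal M0"
    and osc_c: "(\<integral>\<^sup>+ y\<in>ball x0 \<rho>1. (\<integral>\<^sup>+ z\<in>ball x0 \<rho>1.
      ennreal (norm (c t y - c t z) powr q) \<partial>lborel) \<partial>lborel) \<le> ennreal M0" for t x0
    by (rule order_trans[OF _ osc[of t x0]], intro nn_integral_mono mult_right_mono ennreal_leI; simp)+
  have "ball_local_Lr (p / (p - 1)) \<rho>1 bb"
    by (rule ball_local_Lr_of_oscillation_bound[OF r \<rho>1 m(1) mD _ osc_bb M0 D_ae D_int]) (simp add: D_def c0)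
  moreover have "ball_local_Lr (p / (p - 1)) \<rho>1 b"
    by (rule ball_local_Lr_of_oscillation_bound[OF r \<rho>1 m(2) mD _ osc_b M0 D_ae D_int]) (simp add: D_def c0)
  moreover have "ball_local_Lr (p / (p - 1)) \<rho>1 c"
    by (rule ball_local_Lr_of_oscillation_bound[OF r \<rho>1 m(3) mD _ osc_c M0 D_ae D_int]) (simp add: D_def c0)
  ultimately show ?thesis by blast
qed

theorem corollary5p6:
  fixes p q K \<rho>0 \<rho>1 \<gamma> T :: real
    and a :: "real \<Rightarrow> real^'d::finite \<Rightarrow> real^'d^'d"
    and bb b :: "real \<Rightarrow> real^'d \<Rightarrow> real^'d"
    and c :: "real \<Rightarrow> real^'d \<Rightarrow> real"
    and \<phi> :: "real^'d \<Rightarrow> real"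
  assumes p: "1 < p"
    and K: "0 \<le> K"
    and rho0: "0 < \<rho>0" "\<rho>0 \<le> 1"
    and rho1: "0 < \<rho>1" "\<rho>1 \<le> 1"
    and q: "q > min (real CARD('d)) p" "q > min (real CARD('d)) (p / (p - 1))"
           "q \<ge> max (real CARD('d)) (max p (p / (p - 1)))"
    and gamma: "0 < \<gamma>" "\<gamma> \<le> 1"
    and A: "assumption_A p a bb b c"
    and B: "assumption_B q K \<rho>1 \<gamma> bb b c"
    and C: "assumption_C \<rho>0 \<gamma> a"
    and phi: "test_fn \<phi>"
    and T: "0 < T"
  shows "cont_op p T (\<lambda>u Du t x. (b t x \<bullet> Du t x) * \<phi> x)
       \<and> cont_op p T (\<lambda>u Du t x. u t x * (bb t x \<bullet> grad \<phi> x))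
       \<and> cont_op p T (\<lambda>u Du t x. c t x * u t x * \<phi> x)"
proof -
  define r where "r = p / (p - 1)"
  have r: "r > 0" using p unfolding r_def by simp
  have "p / (p - 1) \<le> q" using q(3) by (metis max.bounded_iff)
  then have local: "ball_local_Lr r \<rho>1 bb" "ball_local_Lr r \<rho>1 b" "ball_local_Lr r \<rho>1 c"
    using assumptions_AB_ball_local_Lr[OF p K rho1 _ less_imp_le[OF gamma(1)] A B] unfolding r_def by simp_all
  note meas[measurable] = assumption_A_measurable[OF A] borel_measurable_test_fn[OF phi]
  note cutoff = time_local_Lr_test_fn_cutoff[OF phi r rho1(1)]
  have "time_local_Lr r (\<lambda>t x. \<phi> x *\<^sub>R b t x)"
    using r by (intro time_local_Lr_mono[OF cutoff(1)[OF meas(2) local(2)]]) (auto simp: mult.commute)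
  then have "cont_op p T (\<lambda>u Du t x. (\<phi> x *\<^sub>R b t x) \<bullet> Du t x)"
    by (intro cont_op_inner_gradient[OF p T]) (simp_all add: r_def)
  moreover have "time_local_Lr r (\<lambda>t x. bb t x \<bullet> grad \<phi> x)"
    using r by (intro time_local_Lr_mono[OF cutoff(2)[OF meas(1) local(1)]]) (auto simp: Cauchy_Schwarz_ineq2)
  then have "cont_op p T (\<lambda>u Du t x. u t x * (bb t x \<bullet> grad \<phi> x))"
    by (intro cont_op_multiplication[OF p T]) (simp_all add: r_def)
  moreover have "time_local_Lr r (\<lambda>t x. c t x * \<phi> x)"
    using r by (intro time_local_Lr_mono[OF cutoff(1)[OF meas(3) local(3)]]) (auto simp: abs_mult)
  then have "cont_op p T (\<lambda>u Du t x. u t x * (c t x * \<phi> x))"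
    by (intro cont_op_multiplication[OF p T]) (simp_all add: r_def)
  ultimately show ?thesis
    by (simp add: mult.commute mult.left_commute)
qed

end
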